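(* Let $K\in\mathbb{N}$ and let $\mathcal{S}$ be a collection of subsets $S\subset[K]$, each containing exactly four elements, such that every index $j\in[K]$ is contained in at most two sets of $\mathcal{S}$. Then there exist subsets $T(S)\subset S$, one for each $S\in\mathcal{S}$, such that $|T(S)|\ge1$ for every $S\in\mathcal{S}$, the sets $T(S)$ are pairwise disjoint, and $|T(S)|=3$ for at least $|\mathcal{S}|/4$ of the sets $S\in\mathcal{S}$. *)

theory Defs
  imports Main
begin

end

theory Submission
  imports Defs "HOL-Library.Disjoint_Sets"
begin

text \<open>View the sets as vertices of a multigraph whose edges are the elements lying in two sets;
  every vertex has degree at most four. Splitting off pairs of edges at a vertex (as in the proof
  that graphs have balanced orientations) gives every set two of its elements, disjointly, and the
  remaining elements can be handed to any set containing them. Sets holding three elements are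
  rich. Among the sets holding exactly two, take a maximal matching of pairs \<open>(v, w)\<close> where
  \<open>v\<close> contains an element selected by \<open>w\<close>; moving that element from \<open>w\<close> to \<open>v\<close> makes \<open>v\<close> rich
  and leaves one element to \<open>w\<close>. By maximality, the two unselected elements of every unmatched
  set are selected by rich or matched sets, and by the degree bound no element is counted twice;
  hence \<open>|\<S>| \<le> 4 (#rich + #matched)\<close>.\<close>

lemma card_other_sets_containing_le_1:
  assumes "card {s\<in>V. x \<in> A s} \<le> 2" "v \<in> V" "x \<in> A v"
  shows "card {s\<in>V - {v}. x \<in> A s} \<le> 1"
proof -
  have "{s\<in>V - {v}. x \<in> A s} = {s\<in>V. x \<in> A s} - {v}" by blast
  then show ?thesis using assms by (simp add: card_Diff_singleton_if)
qed

lemma other_set_containing_unique: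
  assumes "finite V" "card {s\<in>V. x \<in> A s} \<le> 2" "v \<in> V" "x \<in> A v"
    and "s \<in> V" "t \<in> V" "s \<noteq> v" "t \<noteq> v" "x \<in> A s" "x \<in> A t"
  shows "s = t"
proof -
  have "finite {s\<in>V - {v}. x \<in> A s}" using assms(1) by simp
  then show ?thesis
    using card_other_sets_containing_le_1[OF assms(2-4)] assms(5-)
    by (auto simp: card_le_Suc0_iff_eq)
qed

definition disjoint_selection ::
    "'i set \<Rightarrow> ('i \<Rightarrow> 'a set) \<Rightarrow> ('i \<Rightarrow> nat) \<Rightarrow> ('i \<Rightarrow> 'a set) \<Rightarrow> bool"
  where "disjoint_selection V A d T \<longleftrightarrow>
    (\<forall>v\<in>V. T v \<subseteq> A v \<and> d v \<le> card (T v)) \<and> disjoint_family_on T V"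

text \<open>Splitting off the edges \<open>x\<close>, \<open>y\<close> at \<open>v\<close>: they are replaced by a single edge \<open>x\<close>
  joining their other endpoints.\<close>

definition split_off :: "'i \<Rightarrow> 'a \<Rightarrow> 'a \<Rightarrow> ('i \<Rightarrow> 'a set) \<Rightarrow> 'i \<Rightarrow> 'a set"
  where "split_off v x y A s =
    (if s = v then A v - {x, y} else if y \<in> A s then insert x (A s - {y}) else A s)"

lemma card_split_off:
  assumes fin: "finite (A s)" and xy: "x \<in> A v" "y \<in> A v" "x \<noteq> y"
    and no_common: "s \<noteq> v \<Longrightarrow> y \<in> A s \<Longrightarrow> x \<notin> A s"
  shows "card (split_off v x y A s) = (if s = v then card (A s) - 2 else card (A s))"
proof (cases "s \<noteq> v \<and> y \<in> A s")
  case True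
  then have "card (split_off v x y A s) = Suc (card (A s - {y}))"
    using no_common fin by (simp add: split_off_def)
  then show ?thesis using True fin card_Suc_Diff1[of "A s" y] by simp
next
  case False
  then show ?thesis
    using fin xy by (auto simp: split_off_def card_Diff_subset numeral_2_eq_2)
qed

lemma card_sets_containing_split_off_le_2:
  assumes fin: "finite V" and deg: "\<forall>z. card {s\<in>V. z \<in> A s} \<le> 2"
    and v: "v \<in> V" "x \<in> A v" "y \<in> A v"
  shows "card {s\<in>V. z \<in> split_off v x y A s} \<le> 2"
proof (cases "z = x")
  case True
  have "card {s\<in>V. z \<in> split_off v x y A s}
      \<le> card ({s\<in>V - {v}. x \<in> A s} \<union> {s\<in>V - {v}. y \<in> A s})"
    using fin True by (intro card_mono) (auto simp: split_off_def)
  also have "\<dots> \<le> 1 + 1"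
    using card_other_sets_containing_le_1[OF deg[rule_format] v(1)] v(2,3)
    by (meson add_mono card_Un_le order_trans)
  finally show ?thesis by simp
next
  case False
  have "card {s\<in>V. z \<in> split_off v x y A s} \<le> card {s\<in>V. z \<in> A s}"
    using fin False by (intro card_mono) (auto simp: split_off_def split: if_splits)
  then show ?thesis using deg le_trans by blast
qed

lemma split_off_reduction:
  assumes fin: "finite V" "\<forall>s\<in>V. finite (A s)" and deg: "\<forall>z. card {s\<in>V. z \<in> A s} \<le> 2"
    and dem: "\<forall>s\<in>V. 2 * d s \<le> card (A s)"
    and v: "v \<in> V" "x \<in> A v" "y \<in> A v" "x \<noteq> y"
    and no_common: "\<forall>s\<in>V - {v}. x \<in> A s \<longrightarrow> y \<notin> A s"
  shows "(\<Sum>s\<in>V. card (split_off v x y A s)) < (\<Sum>s\<in>V. card (A s))"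
    and "\<forall>s\<in>V. finite (split_off v x y A s)"
    and "\<forall>z. card {s\<in>V. z \<in> split_off v x y A s} \<le> 2"
    and "\<forall>s\<in>V. 2 * (d(v := d v - 1)) s \<le> card (split_off v x y A s)"
proof -
  have card_A': "card (split_off v x y A s) = (if s = v then card (A s) - 2 else card (A s))"
    if "s \<in> V" for s
    using card_split_off[of A s x v y] fin(2) that v(2-4) no_common by blast
  have "2 \<le> card (A v)"
    using v fin(2) by (metis card_2_iff card_mono empty_subsetI insert_subset)
  then show "(\<Sum>s\<in>V. card (split_off v x y A s)) < (\<Sum>s\<in>V. card (A s))"
    using card_A' v(1) by (intro sum_strict_mono_ex1[OF fin(1)]) (auto intro!: bexI[of _ v])
  show "\<forall>s\<in>V. finite (split_off v x y A s)" using fin(2) v(1) by (simp add: split_off_def)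
  show "\<forall>z. card {s\<in>V. z \<in> split_off v x y A s} \<le> 2"
    using card_sets_containing_split_off_le_2[OF fin(1) deg v(1-3)] by blast
  show "\<forall>s\<in>V. 2 * (d(v := d v - 1)) s \<le> card (split_off v x y A s)"
    using dem card_A' by auto
qed

text \<open>\<open>v\<close> takes \<open>x\<close> or \<open>y\<close>, depending on whether \<open>x\<close> was taken in the role of \<open>y\<close>.\<close>

lemma disjoint_selection_split_off:
  assumes fin: "\<forall>s\<in>V. finite (A s)" and v: "v \<in> V" "x \<in> A v" "y \<in> A v" "x \<noteq> y"
    and sel: "disjoint_selection V (split_off v x y A) (d(v := d v - 1)) T'"
  shows "\<exists>T. disjoint_selection V A d T"
proof -
  have T'_sub: "T' s \<subseteq> split_off v x y A s"
    and T'_card: "(d(v := d v - 1)) s \<le> card (T' s)" if "s \<in> V" for s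
    using sel that unfolding disjoint_selection_def by auto
  have disj: "disjoint_family_on T' V" using sel by (simp add: disjoint_selection_def)
  have y_unused: "y \<notin> T' s" if "s \<in> V" for s
    using T'_sub[OF that] v(4) by (auto simp: split_off_def split: if_splits)
  have T'_fin: "finite (T' s)" if "s \<in> V" for s
    by (rule finite_subset[OF T'_sub[OF that]]) (use fin that in \<open>auto simp: split_off_def\<close>)
  have x_v: "x \<notin> T' v" using T'_sub[OF v(1)] by (auto simp: split_off_def)
  show ?thesis
  proof (cases "\<exists>w\<in>V. w \<noteq> v \<and> y \<in> A w \<and> x \<in> T' w")
    case True
    then obtain w where w: "w \<in> V" "w \<noteq> v" "y \<in> A w" "x \<in> T' w" by blast
    have x_unused: "x \<notin> T' s" if "s \<in> V" "s \<noteq> w" for s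
      using disjoint_family_onD[OF disj that(1) w(1) that(2)] w(4) by blast
    define T where "T = T'(v := insert x (T' v), w := insert y (T' w - {x}))"
    have "disjoint_selection V A d T"
      unfolding disjoint_selection_def
    proof (intro conjI ballI)
      fix s assume s: "s \<in> V"
      show "T s \<subseteq> A s"
        using T'_sub[OF s] x_unused[OF s] v w by (auto simp: T_def split_off_def split: if_splits)
      show "d s \<le> card (T s)"
        using T'_card[OF s] w T'_fin[OF v(1)] T'_fin[OF w(1)] x_v y_unused[OF w(1)] v(4)
        by (auto simp: T_def card_Suc_Diff1)
    next
      show "disjoint_family_on T V"
        using disj x_unused y_unused w(2) v(4) unfolding disjoint_family_on_def T_def by auto
    qed
    then show ?thesis by blast
  next
    case False
    define T where "T = T'(v := insert y (T' v))"
    have "disjoint_selection V A d T"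
      unfolding disjoint_selection_def
    proof (intro conjI ballI)
      fix s assume s: "s \<in> V"
      show "T s \<subseteq> A s"
        using T'_sub[OF s] v False s by (auto simp: T_def split_off_def split: if_splits)
      show "d s \<le> card (T s)"
        using T'_card[OF s] T'_fin[OF v(1)] y_unused[OF v(1)] by (auto simp: T_def)
    next
      show "disjoint_family_on T V"
        using disj y_unused unfolding disjoint_family_on_def T_def by auto
    qed
    then show ?thesis by blast
  qed
qed

lemma remove_shared_pair_reduction:
  assumes fin: "finite V" "\<forall>s\<in>V. finite (A s)" and deg: "\<forall>z. card {s\<in>V. z \<in> A s} \<le> 2"
    and dem: "\<forall>s\<in>V. 2 * d s \<le> card (A s)"
    and vu: "v \<in> V" "u \<in> V" "v \<noteq> u"
    and mem: "x \<in> A v" "y \<in> A v" "x \<in> A u" "y \<in> A u" "x \<noteq> y"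
  shows "(\<Sum>s\<in>V. card ((A(v := A v - {x, y}, u := A u - {x, y})) s)) < (\<Sum>s\<in>V. card (A s))"
    and "\<forall>s\<in>V. finite ((A(v := A v - {x, y}, u := A u - {x, y})) s)"
    and "\<forall>z. card {s\<in>V. z \<in> (A(v := A v - {x, y}, u := A u - {x, y})) s} \<le> 2"
    and "\<forall>s\<in>V. 2 * (d(v := d v - 1, u := d u - 1)) s
      \<le> card ((A(v := A v - {x, y}, u := A u - {x, y})) s)"
proof -
  let ?A' = "A(v := A v - {x, y}, u := A u - {x, y})"
  have card_A': "card (?A' s) = (if s = v \<or> s = u then card (A s) - 2 else card (A s))"
    if "s \<in> V" for s
    using that mem vu fin(2) by (auto simp: card_Diff_subset numeral_2_eq_2)
  have "2 \<le> card (A v)"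
    using mem vu(1) fin(2) by (metis card_2_iff card_mono empty_subsetI insert_subset)
  then show "(\<Sum>s\<in>V. card (?A' s)) < (\<Sum>s\<in>V. card (A s))"
    using card_A' vu(1) by (intro sum_strict_mono_ex1[OF fin(1)]) (auto intro!: bexI[of _ v])
  show "\<forall>s\<in>V. finite (?A' s)" using fin(2) vu by simp
  show "\<forall>z. card {s\<in>V. z \<in> ?A' s} \<le> 2"
  proof
    fix z
    have "card {s\<in>V. z \<in> ?A' s} \<le> card {s\<in>V. z \<in> A s}"
      using fin(1) by (intro card_mono) auto
    then show "card {s\<in>V. z \<in> ?A' s} \<le> 2" using deg le_trans by blast
  qed
  show "\<forall>s\<in>V. 2 * (d(v := d v - 1, u := d u - 1)) s \<le> card (?A' s)"
    using dem card_A' by auto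
qed

lemma disjoint_selection_remove_shared_pair:
  assumes fin: "finite V" "\<forall>s\<in>V. finite (A s)" and deg: "\<forall>z. card {s\<in>V. z \<in> A s} \<le> 2"
    and vu: "v \<in> V" "u \<in> V" "v \<noteq> u"
    and mem: "x \<in> A v" "y \<in> A v" "x \<in> A u" "y \<in> A u" "x \<noteq> y"
    and sel: "disjoint_selection V (A(v := A v - {x, y}, u := A u - {x, y}))
      (d(v := d v - 1, u := d u - 1)) T'"
  shows "\<exists>T. disjoint_selection V A d T"
proof -
  have only: "s = v \<or> s = u" if "s \<in> V" "x \<in> A s \<or> y \<in> A s" for s
    using that other_set_containing_unique[OF fin(1) deg[rule_format] vu(1)] vu mem by blast
  have T'_sub: "T' s \<subseteq> (A(v := A v - {x, y}, u := A u - {x, y})) s"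
    and T'_card: "(d(v := d v - 1, u := d u - 1)) s \<le> card (T' s)" if "s \<in> V" for s
    using sel that unfolding disjoint_selection_def by auto
  have disj: "disjoint_family_on T' V" using sel by (simp add: disjoint_selection_def)
  have unused: "x \<notin> T' s" "y \<notin> T' s" if "s \<in> V" for s
    using T'_sub[OF that] only[OF that] by (auto split: if_splits)
  have T'_fin: "finite (T' s)" if "s \<in> V" for s
    by (rule finite_subset[OF T'_sub[OF that]]) (use fin(2) that in auto)
  define T where "T = T'(v := insert x (T' v), u := insert y (T' u))"
  have "disjoint_selection V A d T"
    unfolding disjoint_selection_def
  proof (intro conjI ballI)
    fix s assume s: "s \<in> V"
    show "T s \<subseteq> A s" using T'_sub[OF s] mem vu by (auto simp: T_def)
    show "d s \<le> card (T s)"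
      using T'_card[OF s] T'_fin[OF s] unused[OF s] vu by (auto simp: T_def)
  next
    show "disjoint_family_on T V"
      using disj unused vu mem(5) unfolding disjoint_family_on_def T_def by auto
  qed
  then show ?thesis by blast
qed

lemma exists_disjoint_selection:
  assumes "finite V" "\<forall>v\<in>V. finite (A v)" "\<forall>x. card {v\<in>V. x \<in> A v} \<le> 2"
    and "\<forall>v\<in>V. 2 * d v \<le> card (A v)"
  shows "\<exists>T. disjoint_selection V A d T"
  using assms(2-)
proof (induction "\<Sum>v\<in>V. card (A v)" arbitrary: A d rule: less_induct)
  case less
  note fin = less.prems(1) and deg = less.prems(2) and dem = less.prems(3)
  show ?case
  proof (cases "\<forall>v\<in>V. d v = 0")
    case True
    then have "disjoint_selection V A d (\<lambda>_. {})"
      by (simp add: disjoint_selection_def disjoint_family_on_def)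
    then show ?thesis by blast
  next
    case False
    then obtain v where v: "v \<in> V" "d v \<noteq> 0" by blast
    then have "2 \<le> card (A v)" using dem by fastforce
    then obtain B where "B \<subseteq> A v" "card B = 2" by (rule obtain_subset_with_card_n)
    then obtain x y where xy: "x \<in> A v" "y \<in> A v" "x \<noteq> y" by (auto simp: card_2_iff)
    show ?thesis
    proof (cases "\<exists>u\<in>V. u \<noteq> v \<and> x \<in> A u \<and> y \<in> A u")
      case True
      then obtain u where u: "u \<in> V" "v \<noteq> u" "x \<in> A u" "y \<in> A u" by blast
      note mem = xy(1,2) u(3,4) xy(3)
      note reduction = remove_shared_pair_reduction[OF assms(1) fin deg dem v(1) u(1,2) mem]
      show ?thesis
        using less.hyps[OF reduction]
          disjoint_selection_remove_shared_pair[OF assms(1) fin deg v(1) u(1,2) mem]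
        by blast
    next
      case False
      then have "\<forall>s\<in>V - {v}. x \<in> A s \<longrightarrow> y \<notin> A s" by blast
      note reduction = split_off_reduction[OF assms(1) fin deg dem v(1) xy this]
      show ?thesis
        using less.hyps[OF reduction] disjoint_selection_split_off[OF fin v(1) xy] by blast
    qed
  qed
qed

lemma exists_covering_refinement:
  assumes disj: "disjoint_family_on T V" and sub: "\<forall>v\<in>V. T v \<subseteq> A v"
  shows "\<exists>T'. disjoint_family_on T' V \<and> (\<forall>v\<in>V. T v \<subseteq> T' v \<and> T' v \<subseteq> A v)
    \<and> (\<Union>v\<in>V. T' v) = (\<Union>v\<in>V. A v)"
proof -
  define owner where "owner x = (SOME v. v \<in> V \<and> x \<in> A v)" for x
  have owner: "owner x \<in> V \<and> x \<in> A (owner x)" if "x \<in> (\<Union>v\<in>V. A v)" for x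
    using that unfolding owner_def by (metis (mono_tags, lifting) UN_E someI)
  define T' where "T' v = T v \<union> {x \<in> A v. x \<notin> (\<Union>u\<in>V. T u) \<and> owner x = v}" for v
  have "disjoint_family_on T' V"
    using disj unfolding disjoint_family_on_def T'_def by blast
  moreover have "(\<Union>v\<in>V. T' v) = (\<Union>v\<in>V. A v)"
    using sub owner unfolding T'_def by blast
  moreover have "\<forall>v\<in>V. T v \<subseteq> T' v \<and> T' v \<subseteq> A v"
    using sub unfolding T'_def by blast
  ultimately show ?thesis by blast
qed

lemma exists_covering_disjoint_selection:
  assumes fin: "finite V" "\<forall>v\<in>V. finite (A v)" and deg: "\<forall>x. card {v\<in>V. x \<in> A v} \<le> 2"
    and dem: "\<forall>v\<in>V. 2 * d v \<le> card (A v)"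
  shows "\<exists>T. disjoint_selection V A d T \<and> (\<Union>v\<in>V. T v) = (\<Union>v\<in>V. A v)"
proof -
  obtain T0 where T0: "disjoint_selection V A d T0"
    using exists_disjoint_selection[OF fin deg dem] by blast
  then obtain T where disj: "disjoint_family_on T V" and T: "\<forall>v\<in>V. T0 v \<subseteq> T v \<and> T v \<subseteq> A v"
    and cover: "(\<Union>v\<in>V. T v) = (\<Union>v\<in>V. A v)"
    using exists_covering_refinement[of T0 V A] unfolding disjoint_selection_def by auto
  have "d v \<le> card (T v)" if "v \<in> V" for v
  proof -
    have "finite (T v)" using T fin(2) that finite_subset by blast
    then have "card (T0 v) \<le> card (T v)" using T that by (simp add: card_mono)
    then show ?thesis using T0 that unfolding disjoint_selection_def by fastforce
  qed
  then have "disjoint_selection V A d T" using disj T by (simp add: disjoint_selection_def)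
  then show ?thesis using cover by blast
qed

definition arc_matching :: "'a set \<Rightarrow> ('a \<Rightarrow> 'a \<Rightarrow> bool) \<Rightarrow> 'a set \<Rightarrow> ('a \<Rightarrow> 'a) \<Rightarrow> bool"
  where "arc_matching N R P h \<longleftrightarrow> P \<subseteq> N \<and> inj_on h P \<and> h ` P \<subseteq> N - P \<and> (\<forall>v\<in>P. R v (h v))"

lemma exists_maximal_arc_matching:
  assumes "finite N"
  shows "\<exists>P h. arc_matching N R P h
    \<and> (\<forall>v\<in>N - P - h ` P. \<forall>w\<in>N - P - h ` P. v \<noteq> w \<longrightarrow> \<not> R v w)"
  using assms
proof (induction N rule: finite_psubset_induct)
  case (psubset N)
  show ?case
  proof (cases "\<exists>v\<in>N. \<exists>w\<in>N. v \<noteq> w \<and> R v w")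
    case True
    then obtain v w where vw: "v \<in> N" "w \<in> N" "v \<noteq> w" "R v w" by blast
    then have "N - {v, w} \<subset> N" by blast
    then obtain P h where P: "arc_matching (N - {v, w}) R P h"
      and max: "\<forall>u\<in>N - {v, w} - P - h ` P. \<forall>u'\<in>N - {v, w} - P - h ` P. u \<noteq> u' \<longrightarrow> \<not> R u u'"
      using psubset.IH[OF \<open>N - {v, w} \<subset> N\<close>] by blast
    have "arc_matching N R (insert v P) (h(v := w))"
      using P vw by (auto simp: arc_matching_def inj_on_def)
    moreover have "N - insert v P - (h(v := w)) ` insert v P = N - {v, w} - P - h ` P"
      using P by (auto simp: arc_matching_def)
    ultimately show ?thesis using max by metis
  next
    case False
    then show ?thesis by (intro exI[of _ "{}"]) (auto simp: arc_matching_def)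
  qed
qed

lemma transfer_along_arc_matching:
  assumes disj: "disjoint_family_on T V" and sub: "\<forall>v\<in>V. T v \<subseteq> A v"
    and fin: "\<forall>v\<in>V. finite (T v)" and m: "arc_matching V (\<lambda>v w. A v \<inter> T w \<noteq> {}) P h"
  shows "\<exists>T'. disjoint_family_on T' V \<and> (\<forall>v\<in>V. T' v \<subseteq> A v \<and> card (T v) \<le> Suc (card (T' v)))
    \<and> (\<forall>v\<in>P. card (T' v) = Suc (card (T v))) \<and> (\<forall>v\<in>V - h ` P. card (T v) \<le> card (T' v))"
proof -
  have P: "P \<subseteq> V" "inj_on h P" "h ` P \<subseteq> V - P" using m by (auto simp: arc_matching_def)
  have "\<forall>v\<in>P. \<exists>x. x \<in> A v \<inter> T (h v)" using m unfolding arc_matching_def by blast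
  then obtain e where e: "\<forall>v\<in>P. e v \<in> A v \<inter> T (h v)" by (auto dest!: bchoice)
  define T' where "T' v = T v - e ` P \<union> (if v \<in> P then {e v} else {})" for v
  have taken: "T v \<inter> e ` P = e ` {u\<in>P. h u = v}" if "v \<in> V" for v
    using e P disjoint_family_onD[OF disj] that by fastforce
  have untaken: "T v \<inter> e ` P = {}" if "v \<in> V - h ` P" for v
    using taken[of v] that by auto
  have fin': "finite (T' v)" if "v \<in> V" for v
    using fin that by (simp add: T'_def)
  have "inj_on e P"
  proof (rule inj_onI)
    fix u w assume "u \<in> P" "w \<in> P" "e u = e w"
    then have "T (h u) \<inter> T (h w) \<noteq> {}" using e by auto
    then have "h u = h w" using disjoint_family_onD[OF disj] P \<open>u \<in> P\<close> \<open>w \<in> P\<close> by blast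
    then show "u = w" using P(2) \<open>u \<in> P\<close> \<open>w \<in> P\<close> by (simp add: inj_on_eq_iff)
  qed
  have "disjoint_family_on T' V"
  unfolding disjoint_family_on_def
  proof (intro ballI impI)
    fix v w assume "v \<in> V" "w \<in> V" "v \<noteq> w"
    then have "T v \<inter> T w = {}" by (rule disjoint_family_onD[OF disj])
    then show "T' v \<inter> T' w = {}"
      using \<open>inj_on e P\<close> \<open>v \<noteq> w\<close> by (auto simp: T'_def inj_on_def)
  qed
  moreover have "T' v \<subseteq> A v" if "v \<in> V" for v
    using sub that e by (auto simp: T'_def)
  moreover have "card (T v) \<le> Suc (card (T' v))" if "v \<in> V" for v
  proof -
    obtain u where "{u'\<in>P. h u' = v} \<subseteq> {u}"
      using P(2) by (auto simp: inj_on_def)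
    then have "T v \<inter> e ` P \<subseteq> {e u}" using taken[OF that] by auto
    then have "card (T v \<inter> e ` P) \<le> 1" using card_mono[of "{e u}"] by fastforce
    moreover have "T v - e ` P \<subseteq> T' v" by (auto simp: T'_def)
    then have "card (T v - e ` P) \<le> card (T' v)" using fin'[OF that] by (rule card_mono[rotated])
    ultimately show ?thesis using card_Int_Diff[of "T v" "e ` P"] fin that by simp
  qed
  moreover have "card (T' v) = Suc (card (T v))" if "v \<in> P" for v
  proof -
    have "e v \<notin> T v"
      using e disjoint_family_onD[OF disj, of v "h v"] that P by auto
    moreover have "T' v = insert (e v) (T v)"
      using untaken[of v] that P by (auto simp: T'_def)
    ultimately show ?thesis using fin that P(1) by auto
  qed
  moreover have "card (T v) \<le> card (T' v)" if "v \<in> V - h ` P" for v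
    using untaken[OF that] fin'[of v] that by (intro card_mono) (auto simp: T'_def)
  ultimately show ?thesis by blast
qed

lemma exists_selection_rich_card_ge:
  fixes V P :: "'i set" and T :: "'i \<Rightarrow> 'a set"
  defines "F \<equiv> {v\<in>V. 3 \<le> card (T v)}"
  assumes fin: "finite V" and disj: "disjoint_family_on T V" and sub: "\<forall>v\<in>V. T v \<subseteq> A v"
    and finT: "\<forall>v\<in>V. finite (T v)" and two: "\<forall>v\<in>V. 2 \<le> card (T v)"
    and m: "arc_matching (V - F) (\<lambda>v w. A v \<inter> T w \<noteq> {}) P h"
  shows "\<exists>T'. disjoint_family_on T' V \<and> (\<forall>v\<in>V. T' v \<subseteq> A v \<and> 1 \<le> card (T' v))
    \<and> card F + card P \<le> card {v\<in>V. 3 \<le> card (T' v)}"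
proof -
  have P: "P \<subseteq> V - F" "h ` P \<subseteq> V - F - P" using m by (auto simp: arc_matching_def)
  have mV: "arc_matching V (\<lambda>v w. A v \<inter> T w \<noteq> {}) P h" using m by (auto simp: arc_matching_def)
  obtain T' where T': "disjoint_family_on T' V"
    "\<forall>v\<in>V. T' v \<subseteq> A v \<and> card (T v) \<le> Suc (card (T' v))"
    "\<forall>v\<in>P. card (T' v) = Suc (card (T v))" "\<forall>v\<in>V - h ` P. card (T v) \<le> card (T' v)"
    using transfer_along_arc_matching[OF disj sub finT mV] by blast
  have rich: "F \<union> P \<subseteq> {v\<in>V. 3 \<le> card (T' v)}"
  proof
    fix v assume v: "v \<in> F \<union> P"
    then have "v \<in> V" using P(1) by (auto simp: F_def)
    have "3 \<le> card (T' v)"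
    proof (cases "v \<in> P")
      case True
      then show ?thesis using bspec[OF T'(3) True] bspec[OF two \<open>v \<in> V\<close>] by simp
    next
      case False
      then have "v \<in> F" "v \<in> V - h ` P" using v P(2) by (auto simp: F_def)
      then show ?thesis using bspec[OF T'(4)] by (force simp: F_def)
    qed
    then show "v \<in> {v\<in>V. 3 \<le> card (T' v)}" using \<open>v \<in> V\<close> by simp
  qed
  have "card F + card P = card (F \<union> P)"
    using fin P(1) by (intro card_Un_disjoint[symmetric]) (auto simp: F_def intro: finite_subset)
  also have "\<dots> \<le> card {v\<in>V. 3 \<le> card (T' v)}"
    using fin rich by (intro card_mono) auto
  finally have "card F + card P \<le> card {v\<in>V. 3 \<le> card (T' v)}" .
  moreover have "\<forall>v\<in>V. T' v \<subseteq> A v \<and> 1 \<le> card (T' v)"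
  proof
    fix v assume "v \<in> V"
    then show "T' v \<subseteq> A v \<and> 1 \<le> card (T' v)" using bspec[OF T'(2)] bspec[OF two] by fastforce
  qed
  ultimately show ?thesis using T'(1) by blast
qed

lemma sum_card_uncovered_le:
  assumes fin: "finite V" "\<forall>v\<in>V. finite (A v)" and deg: "\<forall>x. card {v\<in>V. x \<in> A v} \<le> 2"
    and sub: "\<forall>v\<in>V. T v \<subseteq> A v" and cover: "(\<Union>v\<in>V. T v) = (\<Union>v\<in>V. A v)"
    and W: "W \<subseteq> V" "\<forall>v\<in>W. \<forall>w\<in>W. v \<noteq> w \<longrightarrow> A v \<inter> T w = {}"
  shows "(\<Sum>v\<in>W. card (A v - T v)) \<le> (\<Sum>v\<in>V - W. card (T v))"
proof -
  have owner: "\<exists>u\<in>V. x \<in> T u" if "v \<in> V" "x \<in> A v" for v x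
    using cover that by blast
  have finT: "finite (T u)" if "u \<in> V" for u
    using finite_subset[of "T u" "A u"] sub fin(2) that by blast
  have finW: "finite W" using finite_subset[OF W(1) fin(1)] .
  have "disjoint_family_on (\<lambda>v. A v - T v) W"
    unfolding disjoint_family_on_def
  proof (intro ballI impI, rule ccontr)
    fix v w assume vw: "v \<in> W" "w \<in> W" "v \<noteq> w" "(A v - T v) \<inter> (A w - T w) \<noteq> {}"
    then obtain x where x: "x \<in> A v" "x \<notin> T v" "x \<in> A w" "x \<notin> T w" by blast
    obtain u where u: "u \<in> V" "x \<in> T u" using owner[of v x] vw(1) W(1) x(1) by blast
    then have "x \<in> A u" using sub by blast
    have "v = w"
      by (rule other_set_containing_unique[OF fin(1) deg[rule_format] u(1) \<open>x \<in> A u\<close>])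
        (use vw W(1) x u in auto)
    then show False using vw(3) by contradiction
  qed
  then have "(\<Sum>v\<in>W. card (A v - T v)) = card (\<Union>v\<in>W. A v - T v)"
    using fin(2) W(1) finW by (subst card_UN_disjoint') auto
  also have "\<dots> \<le> card (\<Union>u\<in>V - W. T u)"
  proof (rule card_mono)
    show "finite (\<Union>u\<in>V - W. T u)" using fin(1) finT by simp
    show "(\<Union>v\<in>W. A v - T v) \<subseteq> (\<Union>u\<in>V - W. T u)"
    proof
      fix x assume "x \<in> (\<Union>v\<in>W. A v - T v)"
      then obtain v where v: "v \<in> W" "x \<in> A v" "x \<notin> T v" by blast
      then obtain u where u: "u \<in> V" "x \<in> T u" using owner W(1) by blast
      have "u \<notin> W"
      proof
        assume "u \<in> W"
        moreover have "v \<noteq> u" using v(3) u(2) by auto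
        ultimately have "A v \<inter> T u = {}" using W(2) v(1) by simp
        then show False using v(2) u(2) by blast
      qed
      then show "x \<in> (\<Union>u\<in>V - W. T u)" using u by blast
    qed
  qed
  also have "\<dots> \<le> (\<Sum>u\<in>V - W. card (T u))"
    using fin(1) by (intro card_UN_le) simp
  finally show ?thesis .
qed

lemma card_Un_image_inj_disjoint:
  assumes "finite P" "inj_on h P" "P \<inter> h ` P = {}"
  shows "card (P \<union> h ` P) = 2 * card P"
  using assms by (simp add: card_Un_disjoint card_image)

lemma card_le_4_times_rich_plus_matched:
  fixes V P :: "'i set" and T :: "'i \<Rightarrow> 'a set" and h :: "'i \<Rightarrow> 'i"
  defines "F \<equiv> {v\<in>V. 3 \<le> card (T v)}"
  defines "W \<equiv> V - F - P - h ` P"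
  assumes fin: "finite V" "\<forall>v\<in>V. finite (A v)" and four: "\<forall>v\<in>V. card (A v) = 4"
    and deg: "\<forall>x. card {v\<in>V. x \<in> A v} \<le> 2"
    and sub: "\<forall>v\<in>V. T v \<subseteq> A v" and cover: "(\<Union>v\<in>V. T v) = (\<Union>v\<in>V. A v)"
    and two: "\<forall>v\<in>V. 2 \<le> card (T v)"
    and m: "arc_matching (V - F) R P h" and W: "\<forall>v\<in>W. \<forall>w\<in>W. v \<noteq> w \<longrightarrow> A v \<inter> T w = {}"
  shows "card V \<le> 4 * (card F + card P)"
proof -
  have P: "P \<subseteq> V - F" "inj_on h P" "h ` P \<subseteq> V - F - P" using m by (auto simp: arc_matching_def)
  define Q where "Q = P \<union> h ` P"
  have parts: "V - W = F \<union> Q" "F \<inter> Q = {}" "W \<subseteq> V - F" "Q \<subseteq> V - F"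
    using P by (auto simp: W_def Q_def F_def)
  have finQ: "finite Q" and finF: "finite F"
    using finite_subset[OF _ fin(1)] parts by auto
  have card_Q: "card Q = 2 * card P"
  proof -
    have "finite P" using P(1) fin(1) finite_subset by blast
    then show ?thesis unfolding Q_def using P by (intro card_Un_image_inj_disjoint) auto
  qed
  have finT: "finite (T v)" if "v \<in> V" for v
    using finite_subset[of "T v" "A v"] sub fin(2) that by blast
  have card_T: "card (T v) = 2" if "v \<in> V - F" for v
    using two that unfolding F_def by fastforce
  have "card (A v - T v) = 2" if "v \<in> W" for v
  proof -
    have v: "v \<in> V - F" using that parts(3) by blast
    then have "card (A v - T v) = card (A v) - card (T v)"
      using sub finT by (simp add: card_Diff_subset)
    then show ?thesis using v four card_T by simp
  qed
  then have "2 * card W = (\<Sum>v\<in>W. card (A v - T v))" by simp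
  also have "\<dots> \<le> (\<Sum>v\<in>V - W. card (T v))"
    using parts(3) by (intro sum_card_uncovered_le[OF fin deg sub cover _ W]) blast
  also have "\<dots> = (\<Sum>v\<in>F. card (T v)) + (\<Sum>v\<in>Q. card (T v))"
    using parts(1,2) finQ finF by (simp add: sum.union_disjoint)
  also have "\<dots> \<le> 4 * card F + 2 * card Q"
  proof (rule add_mono)
    have "card (T v) \<le> 4" if "v \<in> F" for v
    proof -
      have "v \<in> V" using that by (simp add: F_def)
      then show ?thesis using card_mono[of "A v" "T v"] fin(2) sub four by simp
    qed
    then show "(\<Sum>v\<in>F. card (T v)) \<le> 4 * card F"
      using sum_bounded_above[of F "\<lambda>v. card (T v)" 4] by simp
    show "(\<Sum>v\<in>Q. card (T v)) \<le> 2 * card Q"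
      using card_T parts(4) by (simp add: subset_iff)
  qed
  finally have "2 * card W \<le> 4 * card F + 2 * card Q" .
  moreover have "card V = card F + card Q + card W"
  proof -
    have "card V = card (V \<inter> W) + card (V - W)" using fin(1) by (rule card_Int_Diff)
    also have "V \<inter> W = W" using parts(3) by blast
    finally show ?thesis using parts(1,2) finF finQ by (simp add: card_Un_disjoint)
  qed
  ultimately show ?thesis using card_Q by (simp add: distrib_left)
qed

lemma exists_subsets_card_min:
  assumes "\<forall>v\<in>V. finite (A v)"
  shows "\<exists>B. \<forall>v\<in>V. B v \<subseteq> A v \<and> card (B v) = min k (card (A v))"
proof -
  have "\<exists>B. B \<subseteq> A v \<and> card B = min k (card (A v))" for v
    using obtain_subset_with_card_n[of "min k (card (A v))" "A v"] by auto
  then show ?thesis by metis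
qed

lemma exists_selection_quarter_rich:
  fixes V :: "'i set" and A :: "'i \<Rightarrow> 'a set"
  assumes fin: "finite V" and four: "\<forall>v\<in>V. card (A v) = 4"
    and deg: "\<forall>x. card {v\<in>V. x \<in> A v} \<le> 2"
  shows "\<exists>T. disjoint_family_on T V \<and> (\<forall>v\<in>V. T v \<subseteq> A v \<and> 1 \<le> card (T v))
    \<and> card V \<le> 4 * card {v\<in>V. 3 \<le> card (T v)}"
proof -
  have finA: "\<forall>v\<in>V. finite (A v)" using four by (simp add: card_ge_0_finite)
  obtain T where "disjoint_selection V A (\<lambda>_. 2) T" and cover: "(\<Union>v\<in>V. T v) = (\<Union>v\<in>V. A v)"
    using exists_covering_disjoint_selection[OF fin finA deg, of "\<lambda>_. 2"] four by auto
  then have disj: "disjoint_family_on T V" and sub: "\<forall>v\<in>V. T v \<subseteq> A v"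
    and two: "\<forall>v\<in>V. 2 \<le> card (T v)"
    by (auto simp: disjoint_selection_def)
  have finT: "\<forall>v\<in>V. finite (T v)" using finA sub finite_subset by blast
  define F where "F = {v\<in>V. 3 \<le> card (T v)}"
  obtain P h where m: "arc_matching (V - F) (\<lambda>v w. A v \<inter> T w \<noteq> {}) P h"
    and max: "\<forall>v\<in>V - F - P - h ` P. \<forall>w\<in>V - F - P - h ` P. v \<noteq> w \<longrightarrow> A v \<inter> T w = {}"
    using exists_maximal_arc_matching[of "V - F" "\<lambda>v w. A v \<inter> T w \<noteq> {}"] fin by auto
  obtain T' where T': "disjoint_family_on T' V" "\<forall>v\<in>V. T' v \<subseteq> A v \<and> 1 \<le> card (T' v)"
    and rich: "card F + card P \<le> card {v\<in>V. 3 \<le> card (T' v)}"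
    using exists_selection_rich_card_ge[OF fin disj sub finT two m[unfolded F_def]]
    unfolding F_def by blast
  have "card V \<le> 4 * (card F + card P)"
    using card_le_4_times_rich_plus_matched[OF fin finA four deg sub cover two
        m[unfolded F_def] max[unfolded F_def]]
    unfolding F_def .
  then show ?thesis using T' rich by (intro exI[of _ T']) simp
qed

theorem lemma11p5:
  fixes K :: nat and \<S> :: "nat set set"
  assumes sub: "\<And>S. S \<in> \<S> \<Longrightarrow> S \<subseteq> {1..K}"
    and four: "\<And>S. S \<in> \<S> \<Longrightarrow> card S = 4"
    and deg: "\<And>j. j \<in> {1..K} \<Longrightarrow> card {S \<in> \<S>. j \<in> S} \<le> 2"
  shows "\<exists>T :: nat set \<Rightarrow> nat set.
           (\<forall>S\<in>\<S>. T S \<subseteq> S \<and> card (T S) \<ge> 1)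
         \<and> (\<forall>S\<in>\<S>. \<forall>S'\<in>\<S>. S \<noteq> S' \<longrightarrow> T S \<inter> T S' = {})
         \<and> 4 * card {S \<in> \<S>. card (T S) = 3} \<ge> card \<S>"
proof -
  have fin: "finite \<S>"
    using sub by (intro finite_subset[of \<S> "Pow {1..K}"]) auto
  have deg_all: "\<forall>x. card {S\<in>\<S>. x \<in> S} \<le> 2"
  proof
    fix x
    show "card {S\<in>\<S>. x \<in> S} \<le> 2"
    proof (cases "x \<in> {1..K}")
      case False
      then have "{S\<in>\<S>. x \<in> S} = {}" using sub by blast
      then show ?thesis by (metis card.empty zero_le)
    qed (rule deg)
  qed
  obtain T where T: "disjoint_family_on T \<S>" "\<forall>S\<in>\<S>. T S \<subseteq> S \<and> 1 \<le> card (T S)"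
    and quarter: "card \<S> \<le> 4 * card {S\<in>\<S>. 3 \<le> card (T S)}"
    using exists_selection_quarter_rich[of \<S> "\<lambda>S. S"] fin four deg_all by auto
  have "\<forall>S\<in>\<S>. finite (T S)"
  proof
    fix S assume "S \<in> \<S>"
    then have "0 < card (T S)" using T(2) by fastforce
    then show "finite (T S)" by (rule card_ge_0_finite)
  qed
  then obtain B where B: "\<forall>S\<in>\<S>. B S \<subseteq> T S \<and> card (B S) = min 3 (card (T S))"
    using exists_subsets_card_min by blast
  have "{S\<in>\<S>. card (B S) = 3} = {S\<in>\<S>. 3 \<le> card (T S)}"
    using B by auto
  moreover have "B S \<inter> B S' = {}" if "S \<in> \<S>" "S' \<in> \<S>" "S \<noteq> S'" for S S'
    using disjoint_family_onD[OF T(1) that] B that by blast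
  moreover have "B S \<subseteq> S \<and> 1 \<le> card (B S)" if "S \<in> \<S>" for S
    using B T(2) that by fastforce
  ultimately show ?thesis using quarter by (intro exI[of _ B]) auto
qed

end
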